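(* If $R$ is a $v$-domain, then every nonzero finitely generated ideal of $R$ is $t$-basic.
   Context: For a domain $R$ with quotient field $K$: $I^{-1}=(R:I)=\{x\in K:xI\subseteq R\}$, $I_v=(I^{-1})^{-1}$, $I_t=\bigcup J_v$ over finitely generated subideals $J\subseteq I$. $R$ is a $v$-domain if every nonzero finitely generated ideal $I$ satisfies $(II^{-1})_v=R$. For a nonzero ideal $I$, an ideal $J\subseteq I$ is a $t$-reduction of $I$ if $(JI^n)_t=(I^{n+1})_t$ for some integer $n\ge0$; $I$ is $t$-basic if every $t$-reduction $J$ of $I$ satisfies $J_t=I_t$. *)

theory Defs
  imports "HOL-Computational_Algebra.Fraction_Field"
begin

text \<open>We work in the quotient field K = 'a fract of a domain R = 'a (class idom).
  R is identified with its image Rset in K; ideals of R are R-submodules of K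
  contained in Rset, fractional sets are arbitrary subsets of K.\<close>

definition Rset :: "'a::idom fract set" where
  "Rset = {Fract a 1 | a. True}"

definition is_rsub :: "'a::idom fract set \<Rightarrow> bool" where
  "is_rsub X \<longleftrightarrow> 0 \<in> X \<and> (\<forall>x\<in>X. \<forall>y\<in>X. x + y \<in> X) \<and> (\<forall>r\<in>Rset. \<forall>x\<in>X. r * x \<in> X)"

definition is_ideal :: "'a::idom fract set \<Rightarrow> bool" where
  "is_ideal I \<longleftrightarrow> is_rsub I \<and> I \<subseteq> Rset"

definition rspan :: "'a::idom fract set \<Rightarrow> 'a fract set" where
  "rspan S = \<Inter>{X. is_rsub X \<and> S \<subseteq> X}"

definition fg_ideal :: "'a::idom fract set \<Rightarrow> bool" where
  "fg_ideal I \<longleftrightarrow> is_ideal I \<and> (\<exists>F. finite F \<and> I = rspan F)"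

definition set_prod :: "'a::idom fract set \<Rightarrow> 'a fract set \<Rightarrow> 'a fract set" where
  "set_prod A B = rspan {a * b | a b. a \<in> A \<and> b \<in> B}"

primrec set_pow :: "'a::idom fract set \<Rightarrow> nat \<Rightarrow> 'a fract set" where
  "set_pow A 0 = Rset"
| "set_pow A (Suc n) = set_prod A (set_pow A n)"

definition colon_inv :: "'a::idom fract set \<Rightarrow> 'a fract set" where
  "colon_inv A = {x. \<forall>a\<in>A. x * a \<in> Rset}"

definition vcl :: "'a::idom fract set \<Rightarrow> 'a fract set" where
  "vcl A = colon_inv (colon_inv A)"

definition tcl :: "'a::idom fract set \<Rightarrow> 'a fract set" where
  "tcl I = \<Union>{vcl J | J. fg_ideal J \<and> J \<subseteq> I}"

definition v_domain :: "'a::idom itself \<Rightarrow> bool" where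
  "v_domain _ \<longleftrightarrow> (\<forall>I::'a fract set. fg_ideal I \<and> I \<noteq> {0} \<longrightarrow>
      vcl (set_prod I (colon_inv I)) = Rset)"

definition t_reduction :: "'a::idom fract set \<Rightarrow> 'a fract set \<Rightarrow> bool" where
  "t_reduction J I \<longleftrightarrow> is_ideal J \<and> J \<subseteq> I \<and>
      (\<exists>n. tcl (set_prod J (set_pow I n)) = tcl (set_pow I (Suc n)))"

definition t_basic :: "'a::idom fract set \<Rightarrow> bool" where
  "t_basic I \<longleftrightarrow> (\<forall>J. t_reduction J I \<longrightarrow> tcl J = tcl I)"

end

theory Submission
  imports Defs
begin

text \<open>Let \<open>A = I\<^sup>n\<close>. Since \<open>IA\<close> is finitely generated, \<open>(JA)\<^sub>t = (IA)\<^sub>t\<close> puts \<open>IA\<close> inside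
  \<open>(J\<^sub>0A)\<^sub>v\<close> for a finitely generated \<open>J\<^sub>0 \<subseteq> J\<close>. In a \<open>v\<close>-domain the nonzero finitely generated
  ideal \<open>A\<close> is \<open>v\<close>-invertible, so it can be cancelled: \<open>I\<^sub>v \<subseteq> (J\<^sub>0)\<^sub>v\<close>, whence \<open>I\<^sub>t \<subseteq> J\<^sub>t\<close>.\<close>

lemma Rset_iff: "x \<in> Rset \<longleftrightarrow> (\<exists>a. x = Fract a 1)"
  by (auto simp: Rset_def)

lemma Rset_0: "0 \<in> Rset"
  by (auto simp: Rset_iff Zero_fract_def)

lemma Rset_1: "1 \<in> Rset"
  by (auto simp: Rset_iff One_fract_def)

lemma Rset_add: "x \<in> Rset \<Longrightarrow> y \<in> Rset \<Longrightarrow> x + y \<in> Rset"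
  by (auto simp: Rset_iff)

lemma Rset_mult: "x \<in> Rset \<Longrightarrow> y \<in> Rset \<Longrightarrow> x * y \<in> Rset"
  by (auto simp: Rset_iff)

lemma rsub_zero: "is_rsub X \<Longrightarrow> 0 \<in> X"
  by (simp add: is_rsub_def)

lemma rsub_add: "is_rsub X \<Longrightarrow> x \<in> X \<Longrightarrow> y \<in> X \<Longrightarrow> x + y \<in> X"
  by (simp add: is_rsub_def)

lemma rsub_smult: "is_rsub X \<Longrightarrow> r \<in> Rset \<Longrightarrow> x \<in> X \<Longrightarrow> r * x \<in> X"
  by (simp add: is_rsub_def)

lemma is_rsub_Rset: "is_rsub Rset"
  by (auto simp: is_rsub_def Rset_0 Rset_add Rset_mult)

lemma is_rsub_mult_preimage: "is_rsub T \<Longrightarrow> is_rsub {x. a * x \<in> T}"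
  unfolding is_rsub_def by (auto simp: distrib_left mult.left_commute)

lemma is_rsub_rspan: "is_rsub (rspan S)"
  unfolding rspan_def is_rsub_def by auto

lemma rspan_superset: "S \<subseteq> rspan S"
  unfolding rspan_def by (rule Inter_greatest) simp

lemma rspan_least: "is_rsub X \<Longrightarrow> S \<subseteq> X \<Longrightarrow> rspan S \<subseteq> X"
  unfolding rspan_def by (rule Inter_lower) simp

lemma rspan_mono: "S \<subseteq> T \<Longrightarrow> rspan S \<subseteq> rspan T"
  by (rule rspan_least[OF is_rsub_rspan subset_trans[OF _ rspan_superset]])

lemma rspan_mult_subset:
  assumes "is_rsub T" "\<And>s. s \<in> S \<Longrightarrow> a * s \<in> T" "x \<in> rspan S"
  shows "a * x \<in> T"
  using rspan_least[OF is_rsub_mult_preimage[OF assms(1)], of S a] assms(2,3) by blast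

lemma Rset_eq_rspan_1: "Rset = rspan {1}"
proof
  show "rspan {1} \<subseteq> Rset"
    by (intro rspan_least is_rsub_Rset) (auto simp: Rset_1)
  show "Rset \<subseteq> rspan {1}"
  proof
    fix r assume "r \<in> Rset"
    then have "r * 1 \<in> rspan {1}"
      using rspan_superset[of "{1}"] by (intro rsub_smult[OF is_rsub_rspan]) auto
    then show "r \<in> rspan {1}" by simp
  qed
qed

lemma fg_ideal_rspan: "finite F \<Longrightarrow> rspan F \<subseteq> Rset \<Longrightarrow> fg_ideal (rspan F)"
  unfolding fg_ideal_def is_ideal_def using is_rsub_rspan by blast

lemma finite_subset_common_support:
  assumes "finite S" "mono f"
    and "\<And>x. x \<in> S \<Longrightarrow> \<exists>G. finite G \<and> G \<subseteq> J \<and> x \<in> f G"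
  shows "\<exists>G. finite G \<and> G \<subseteq> J \<and> S \<subseteq> f G"
  using assms(1,3)
proof (induction S rule: finite_induct)
  case empty
  then show ?case by blast
next
  case (insert x S)
  then obtain G where G: "finite G" "G \<subseteq> J" "S \<subseteq> f G" by blast
  obtain H where H: "finite H" "H \<subseteq> J" "x \<in> f H" using insert.prems by blast
  have "f G \<subseteq> f (G \<union> H)" "f H \<subseteq> f (G \<union> H)"
    using \<open>mono f\<close> by (auto dest: monoD)
  with G H show ?case by (intro exI[of _ "G \<union> H"]) auto
qed

lemma is_rsub_set_prod: "is_rsub (set_prod A B)"
  by (simp add: set_prod_def is_rsub_rspan)

lemma set_prod_memI: "a \<in> A \<Longrightarrow> b \<in> B \<Longrightarrow> a * b \<in> set_prod A B"
  unfolding set_prod_def by (rule subsetD[OF rspan_superset]) blast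

lemma set_prod_mono: "A \<subseteq> A' \<Longrightarrow> B \<subseteq> B' \<Longrightarrow> set_prod A B \<subseteq> set_prod A' B'"
  unfolding set_prod_def by (rule rspan_mono) blast

lemma mono_set_prod_rspan: "mono (\<lambda>G. set_prod (rspan G) A)"
  by (intro monoI set_prod_mono rspan_mono) auto

lemma is_ideal_set_prod:
  assumes "is_ideal A" "is_ideal B"
  shows "is_ideal (set_prod A B)"
proof -
  have "{a * b |a b. a \<in> A \<and> b \<in> B} \<subseteq> Rset"
    using assms Rset_mult unfolding is_ideal_def by blast
  then have "set_prod A B \<subseteq> Rset"
    unfolding set_prod_def by (rule rspan_least[OF is_rsub_Rset])
  then show ?thesis unfolding is_ideal_def using is_rsub_set_prod by blast
qed

lemma set_prod_rspan_rspan: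
  "set_prod (rspan F) (rspan G) = rspan {f * g | f g. f \<in> F \<and> g \<in> G}"
proof
  let ?T = "rspan {f * g | f g. f \<in> F \<and> g \<in> G}"
  have gen: "f * g \<in> ?T" if "f \<in> F" "g \<in> G" for f g
    using that by (intro subsetD[OF rspan_superset]) blast
  have "a * b \<in> ?T" if "a \<in> rspan F" "b \<in> rspan G" for a b
  proof -
    have "f * b \<in> ?T" if "f \<in> F" for f
      by (rule rspan_mult_subset[OF is_rsub_rspan gen[OF that] \<open>b \<in> rspan G\<close>])
    then have "b * a \<in> ?T"
      by (intro rspan_mult_subset[OF is_rsub_rspan _ \<open>a \<in> rspan F\<close>]) (simp add: mult.commute)
    then show ?thesis by (simp add: mult.commute)
  qed
  then show "set_prod (rspan F) (rspan G) \<subseteq> ?T"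
    unfolding set_prod_def by (intro rspan_least[OF is_rsub_rspan]) blast
  show "?T \<subseteq> set_prod (rspan F) (rspan G)"
    unfolding set_prod_def using rspan_superset[of F] rspan_superset[of G]
    by (intro rspan_mono) blast
qed

lemma fg_ideal_set_prod:
  assumes "fg_ideal A" "fg_ideal B"
  shows "fg_ideal (set_prod A B)"
proof -
  from assms obtain F G where FG: "finite F" "A = rspan F" "finite G" "B = rspan G"
    by (auto simp: fg_ideal_def)
  have "finite {f * g | f g. f \<in> F \<and> g \<in> G}"
    using FG(1,3) by (simp add: finite_image_set2)
  moreover have "set_prod A B = rspan {f * g | f g. f \<in> F \<and> g \<in> G}"
    using FG(2,4) by (simp add: set_prod_rspan_rspan)
  moreover have "is_ideal (set_prod A B)"
    using is_ideal_set_prod assms by (auto simp: fg_ideal_def)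
  ultimately show ?thesis unfolding fg_ideal_def by blast
qed

lemma fg_ideal_set_pow: "fg_ideal I \<Longrightarrow> fg_ideal (set_pow I n)"
proof (induction n)
  case 0
  have "is_ideal (Rset :: 'a fract set)" unfolding is_ideal_def using is_rsub_Rset by blast
  then show ?case unfolding fg_ideal_def set_pow.simps using Rset_eq_rspan_1 by blast
next
  case (Suc n)
  then show ?case by (simp add: fg_ideal_set_prod)
qed

lemma set_pow_nonzero:
  assumes "is_ideal I" "I \<noteq> {0}"
  shows "\<exists>x\<in>set_pow I n. x \<noteq> 0"
proof (induction n)
  case 0
  show ?case using Rset_1 by force
next
  case (Suc n)
  have "0 \<in> I" using assms(1) rsub_zero unfolding is_ideal_def by blast
  with assms(2) obtain a where "a \<in> I" "a \<noteq> 0" by blast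
  moreover obtain x where "x \<in> set_pow I n" "x \<noteq> 0" using Suc.IH by blast
  ultimately have "a * x \<in> set_pow I (Suc n)" "a * x \<noteq> 0"
    by (simp_all add: set_prod_memI)
  then show ?case by blast
qed

lemma set_prod_finite_support:
  assumes "x \<in> set_prod J A"
  shows "\<exists>G. finite G \<and> G \<subseteq> J \<and> x \<in> set_prod (rspan G) A"
proof -
  \<comment> \<open>The elements supported on a finite part of \<open>J\<close> form a submodule containing the generators.\<close>
  define U where "U = {x. \<exists>G. finite G \<and> G \<subseteq> J \<and> x \<in> set_prod (rspan G) A}"
  have memU: "x \<in> U \<longleftrightarrow> (\<exists>G. finite G \<and> G \<subseteq> J \<and> x \<in> set_prod (rspan G) A)" for x
    by (simp add: U_def)
  have "is_rsub U"
    unfolding is_rsub_def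
  proof (intro conjI ballI)
    show "0 \<in> U"
      unfolding memU by (intro exI[of _ "{}"]) (simp add: rsub_zero[OF is_rsub_set_prod])
    fix x y assume "x \<in> U" "y \<in> U"
    then obtain G where G: "finite G" "G \<subseteq> J" "{x, y} \<subseteq> set_prod (rspan G) A"
      using finite_subset_common_support[OF _ mono_set_prod_rspan, of "{x, y}" J]
      unfolding memU by (metis empty_iff finite.emptyI finite.insertI insert_iff)
    then show "x + y \<in> U"
      unfolding memU by (intro exI[of _ G]) (simp add: rsub_add[OF is_rsub_set_prod])
  next
    fix r x :: "'a fract" assume "r \<in> Rset" "x \<in> U"
    then obtain G where "finite G" "G \<subseteq> J" "x \<in> set_prod (rspan G) A"
      unfolding memU by blast
    with \<open>r \<in> Rset\<close> show "r * x \<in> U"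
      unfolding memU by (intro exI[of _ G]) (simp add: rsub_smult[OF is_rsub_set_prod])
  qed
  moreover have "j * b \<in> U" if "j \<in> J" "b \<in> A" for j b
  proof -
    have "j * b \<in> set_prod (rspan {j}) A"
      using rspan_superset[of "{j}"] \<open>b \<in> A\<close> by (intro set_prod_memI) auto
    with \<open>j \<in> J\<close> show ?thesis
      unfolding memU by (intro exI[of _ "{j}"]) simp
  qed
  then have "{j * b | j b. j \<in> J \<and> b \<in> A} \<subseteq> U" by blast
  ultimately have "set_prod J A \<subseteq> U"
    unfolding set_prod_def by (rule rspan_least)
  with assms have "x \<in> U" by blast
  then show ?thesis unfolding memU .
qed

lemma is_rsub_colon_inv: "is_rsub (colon_inv X)"
  unfolding is_rsub_def colon_inv_def
  by (auto simp: Rset_0 distrib_right Rset_add mult.assoc Rset_mult)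

lemma colon_inv_antimono: "X \<subseteq> Y \<Longrightarrow> colon_inv Y \<subseteq> colon_inv X"
  unfolding colon_inv_def by auto

lemma vcl_superset: "X \<subseteq> vcl X"
  unfolding vcl_def colon_inv_def by (auto simp: mult.commute)

lemma vcl_mono: "X \<subseteq> Y \<Longrightarrow> vcl X \<subseteq> vcl Y"
  unfolding vcl_def by (intro colon_inv_antimono)

lemma is_rsub_vcl: "is_rsub (vcl X)"
  unfolding vcl_def by (rule is_rsub_colon_inv)

lemma colon_inv_vcl: "colon_inv (vcl X) = colon_inv X"
  by (metis colon_inv_antimono subset_antisym vcl_def vcl_superset)

lemma colon_inv_rspan: "colon_inv (rspan S) = colon_inv S"
proof
  show "colon_inv (rspan S) \<subseteq> colon_inv S"
    by (intro colon_inv_antimono rspan_superset)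
  show "colon_inv S \<subseteq> colon_inv (rspan S)"
    using rspan_mult_subset[OF is_rsub_Rset] by (auto simp: colon_inv_def)
qed

lemma mem_colon_inv_set_prod:
  "z \<in> colon_inv (set_prod X Y) \<longleftrightarrow> (\<forall>x\<in>X. \<forall>y\<in>Y. z * (x * y) \<in> Rset)"
  unfolding set_prod_def colon_inv_rspan by (auto simp: colon_inv_def)

lemma vcl_subset_tcl: "fg_ideal K \<Longrightarrow> K \<subseteq> X \<Longrightarrow> vcl K \<subseteq> tcl X"
  unfolding tcl_def by blast

lemma tcl_mono: "X \<subseteq> Y \<Longrightarrow> tcl X \<subseteq> tcl Y"
  unfolding tcl_def by blast

lemma tcl_fg_ideal: "fg_ideal X \<Longrightarrow> tcl X = vcl X"
  unfolding tcl_def using vcl_mono by blast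

lemma tcl_set_prod_finite_support:
  assumes "x \<in> tcl (set_prod J A)"
  shows "\<exists>G. finite G \<and> G \<subseteq> J \<and> x \<in> vcl (set_prod (rspan G) A)"
proof -
  obtain K where K: "fg_ideal K" "K \<subseteq> set_prod J A" "x \<in> vcl K"
    using assms unfolding tcl_def by blast
  then obtain F where F: "finite F" "K = rspan F" unfolding fg_ideal_def by blast
  have "\<exists>G. finite G \<and> G \<subseteq> J \<and> F \<subseteq> set_prod (rspan G) A"
  proof (rule finite_subset_common_support[OF F(1) mono_set_prod_rspan])
    fix y assume "y \<in> F"
    with F(2) K(2) rspan_superset have "y \<in> set_prod J A" by blast
    then show "\<exists>G. finite G \<and> G \<subseteq> J \<and> y \<in> set_prod (rspan G) A"
      by (rule set_prod_finite_support)
  qed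
  then obtain G where G: "finite G" "G \<subseteq> J" "F \<subseteq> set_prod (rspan G) A" by blast
  have "vcl K \<subseteq> vcl (set_prod (rspan G) A)"
    unfolding F(2) by (intro vcl_mono rspan_least[OF is_rsub_set_prod G(3)])
  with K(3) G(1,2) show ?thesis by blast
qed

lemma fg_subset_tcl_set_prod:
  assumes "fg_ideal X" "X \<subseteq> tcl (set_prod J A)"
  shows "\<exists>G. finite G \<and> G \<subseteq> J \<and> X \<subseteq> vcl (set_prod (rspan G) A)"
proof -
  obtain F where F: "finite F" "X = rspan F" using assms(1) unfolding fg_ideal_def by blast
  have "\<exists>G. finite G \<and> G \<subseteq> J \<and> F \<subseteq> vcl (set_prod (rspan G) A)"
  proof (rule finite_subset_common_support[OF F(1)])
    show "mono (\<lambda>G. vcl (set_prod (rspan G) A))"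
      by (intro monoI vcl_mono set_prod_mono rspan_mono) auto
    show "\<exists>G. finite G \<and> G \<subseteq> J \<and> x \<in> vcl (set_prod (rspan G) A)" if "x \<in> F" for x
    proof (rule tcl_set_prod_finite_support)
      show "x \<in> tcl (set_prod J A)" using assms(2) rspan_superset[of F] that F(2) by blast
    qed
  qed
  then obtain G where "finite G" "G \<subseteq> J" "F \<subseteq> vcl (set_prod (rspan G) A)" by blast
  moreover from this(3) have "X \<subseteq> vcl (set_prod (rspan G) A)"
    unfolding F(2) by (rule rspan_least[OF is_rsub_vcl])
  ultimately show ?thesis by blast
qed

lemma v_domain_vcl_cancel:
  assumes "v_domain TYPE('a::idom)"
    and A: "fg_ideal (A :: 'a fract set)" "A \<noteq> {0}"
    and sub: "set_prod B A \<subseteq> vcl (set_prod C A)"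
  shows "vcl B \<subseteq> vcl C"
proof -
  have CA: "colon_inv (set_prod C A) \<subseteq> colon_inv (set_prod B A)"
    using colon_inv_antimono[OF sub] by (simp add: colon_inv_vcl)
  have "vcl (set_prod A (colon_inv A)) = Rset"
    using assms(1) A by (simp add: v_domain_def)
  then have one: "1 \<in> colon_inv (colon_inv (set_prod A (colon_inv A)))"
    using Rset_1 unfolding vcl_def by simp
  have "colon_inv C \<subseteq> colon_inv B"
  proof
    fix z assume z: "z \<in> colon_inv C"
    have "z * b \<in> Rset" if "b \<in> B" for b
    proof -
      \<comment> \<open>\<open>zb\<close> lies in \<open>(AA\<inverse>)\<inverse>\<close>, which is contained in \<open>R\<close> because \<open>1 \<in> (AA\<inverse>)\<^sub>v\<close>.\<close>
      have "z * b \<in> colon_inv (set_prod A (colon_inv A))"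
        unfolding mem_colon_inv_set_prod
      proof (intro ballI)
        fix a u assume "a \<in> A" "u \<in> colon_inv A"
        have "z * u \<in> colon_inv (set_prod C A)"
          unfolding mem_colon_inv_set_prod
        proof (intro ballI)
          fix c a' assume "c \<in> C" "a' \<in> A"
          moreover have "z * c \<in> Rset" using z \<open>c \<in> C\<close> by (simp add: colon_inv_def)
          moreover have "u * a' \<in> Rset" using \<open>u \<in> colon_inv A\<close> \<open>a' \<in> A\<close>
            by (simp add: colon_inv_def)
          ultimately have "(z * c) * (u * a') \<in> Rset" by (simp add: Rset_mult)
          then show "z * u * (c * a') \<in> Rset" by (simp add: ac_simps)
        qed
        with CA have "z * u \<in> colon_inv (set_prod B A)" by blast
        with \<open>a \<in> A\<close> \<open>b \<in> B\<close> have "z * u * (b * a) \<in> Rset"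
          unfolding mem_colon_inv_set_prod by blast
        then show "z * b * (a * u) \<in> Rset" by (simp add: ac_simps)
      qed
      with one have "1 * (z * b) \<in> Rset" unfolding colon_inv_def by blast
      then show ?thesis by simp
    qed
    then show "z \<in> colon_inv B" by (simp add: colon_inv_def)
  qed
  then show ?thesis unfolding vcl_def by (rule colon_inv_antimono)
qed

theorem corollary1p9:
  assumes "v_domain TYPE('a::idom)"
    and "fg_ideal (I :: 'a fract set)" and "I \<noteq> {0}"
  shows "t_basic I"
  unfolding t_basic_def
proof (intro allI impI)
  fix J :: "'a fract set" assume "t_reduction J I"
  then obtain n where J: "is_ideal J" "J \<subseteq> I"
    and eq: "tcl (set_prod J (set_pow I n)) = tcl (set_prod I (set_pow I n))"
    unfolding t_reduction_def set_pow.simps by blast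
  define A where "A = set_pow I n"
  have "is_ideal I" using assms(2) unfolding fg_ideal_def by blast
  then have A: "fg_ideal A" "A \<noteq> {0}"
    using fg_ideal_set_pow[OF assms(2)] set_pow_nonzero[OF _ assms(3), of n]
    unfolding A_def by auto
  have IA: "fg_ideal (set_prod I A)" using assms(2) A(1) by (rule fg_ideal_set_prod)
  have "tcl (set_prod J A) = tcl (set_prod I A)" using eq by (simp add: A_def)
  then have "set_prod I A \<subseteq> tcl (set_prod J A)"
    unfolding tcl_fg_ideal[OF IA] by (simp add: vcl_superset)
  then obtain G where G: "finite G" "G \<subseteq> J" "set_prod I A \<subseteq> vcl (set_prod (rspan G) A)"
    by (blast dest: fg_subset_tcl_set_prod[OF IA])
  have "vcl I \<subseteq> vcl (rspan G)" using G(3) by (rule v_domain_vcl_cancel[OF assms(1) A])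
  moreover have "rspan G \<subseteq> J" using J(1) G(2) by (intro rspan_least) (auto simp: is_ideal_def)
  moreover have "fg_ideal (rspan G)" using G(1) J(1) \<open>rspan G \<subseteq> J\<close>
    by (intro fg_ideal_rspan) (auto simp: is_ideal_def)
  ultimately have "tcl I \<subseteq> tcl J" using tcl_fg_ideal[OF assms(2)] vcl_subset_tcl by blast
  with tcl_mono[OF J(2)] show "tcl J = tcl I" by blast
qed

end
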